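(* Let $m, n_0, n_1$ be positive integers and $n(\lambda) = n_0 + n_1\lambda$. Suppose $x(\lambda) = x_0 + x_1\lambda$, $y(\lambda) = y_0 + y_1\lambda$, $z(\lambda) = z_0 + z_1\lambda$ are polynomials of degree $1$ with positive rational coefficients satisfying $$\frac{m}{n(\lambda)} = \frac{1}{x(\lambda)} + \frac{1}{y(\lambda)} + \frac{1}{z(\lambda)}$$ identically. Then $$x_1 = \frac{x_0 n_1}{n_0},\qquad y_1 = \frac{y_0 n_1}{n_0},\qquad z_1 = \frac{z_0 n_1}{n_0}.$$
   Context: $\lambda$ is an indeterminate; the equation is an identity of rational functions in $\lambda$. *)

theory Defs
  imports "HOL-Computational_Algebra.Polynomial" "HOL-Computational_Algebra.Fraction_Field"
begin

type_synonym ratfun = "rat poly fract"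

definition rf :: "rat poly \<Rightarrow> ratfun" where
  "rf p = Fract p 1"

end

theory Submission
  imports Defs
begin

text \<open>Clearing denominators gives the polynomial identity
  \<open>m x y z = n (y z + x z + x y)\<close>. Let \<open>r\<close> be the root of \<open>x\<close>. Among \<open>x, y, z\<close>,
  cancel the power of \<open>\<lambda> - r\<close> shared by those that vanish at \<open>r\<close>, then evaluate at \<open>r\<close>.
  What remains of \<open>y z + x z + x y\<close> is a sum of products of positive leading coefficients
  and nonzero values, so it does not vanish at \<open>r\<close>. Hence \<open>n(r) = 0\<close>, which says
  that \<open>x\<close> and \<open>n\<close> are proportional. The same holds for \<open>y\<close> and \<open>z\<close>.\<close>

lemma linear_poly_eq_smult_root:
  fixes a b r :: "'a::comm_ring_1"
  assumes "poly [:a, b:] r = 0"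
  shows "[:a, b:] = smult b [:- r, 1:]"
  using assms by (simp add: algebra_simps eq_neg_iff_add_eq_0)

lemma mult_cancel_common_factor:
  fixes M N P Q c A B :: "'a::idom"
  assumes "P = c * A" and "Q = c * B" and "M * P = N * Q" and "c \<noteq> 0"
  shows "M * A = N * B"
  using assms by (metis mult.left_commute mult_left_cancel)

lemma common_root_of_reciprocal_sum:
  fixes M N X Y Z :: "'a::linordered_field poly" and x0 x1 y0 y1 z0 z1 r :: 'a
  assumes X_coeffs: "X = [:x0, x1:]" and Y_coeffs: "Y = [:y0, y1:]"
    and Z_coeffs: "Z = [:z0, z1:]"
    and eq: "M * (X * Y * Z) = N * (Y * Z + X * Z + X * Y)"
    and pos: "x1 > 0" "y1 > 0" "z1 > 0"
    and root: "poly X r = 0"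
  shows "poly N r = 0"
proof -
  define q where "q = [:- r, 1:]"
  have q_nz: "q \<noteq> 0" and q_root: "poly q r = 0" by (simp_all add: q_def)
  have X: "X = smult x1 q"
    using root unfolding X_coeffs q_def by (rule linear_poly_eq_smult_root)
  have one_other_vanishes: "poly N r = 0"
    if V: "V = smult v1 q" and "v1 > 0" and W: "poly W r \<noteq> 0"
      and eqVW: "M * (X * V * W) = N * (V * W + X * W + X * V)" for V W v1
  proof -
    have "X * V * W = q * (smult (x1 * v1) q * W)"
      unfolding X V by (simp add: mult_ac)
    moreover have "V * W + X * W + X * V = q * (smult (x1 + v1) W + smult (x1 * v1) q)"
      unfolding X V by (simp add: algebra_simps smult_add_left)
    ultimately have "M * (smult (x1 * v1) q * W) = N * (smult (x1 + v1) W + smult (x1 * v1) q)"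
      using eqVW q_nz by (rule mult_cancel_common_factor)
    from arg_cong[OF this, of "\<lambda>p. poly p r"] show ?thesis
      using W pos(1) \<open>v1 > 0\<close> by (simp add: q_root)
  qed
  consider "poly Y r = 0" "poly Z r = 0" | "poly Y r = 0" "poly Z r \<noteq> 0"
    | "poly Y r \<noteq> 0" "poly Z r = 0" | "poly Y r \<noteq> 0" "poly Z r \<noteq> 0"
    by blast
  then show ?thesis
  proof cases
    case 1
    have Y: "Y = smult y1 q"
      using \<open>poly Y r = 0\<close> unfolding Y_coeffs q_def by (rule linear_poly_eq_smult_root)
    have Z: "Z = smult z1 q"
      using \<open>poly Z r = 0\<close> unfolding Z_coeffs q_def by (rule linear_poly_eq_smult_root)
    have "X * Y * Z = q\<^sup>2 * smult (x1 * y1 * z1) q"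
      unfolding X Y Z by (simp add: mult_ac power2_eq_square)
    moreover have "Y * Z + X * Z + X * Y = q\<^sup>2 * [:y1 * z1 + x1 * z1 + x1 * y1:]"
      unfolding X Y Z by (simp add: algebra_simps power2_eq_square smult_add_left)
    ultimately have "M * smult (x1 * y1 * z1) q = N * [:y1 * z1 + x1 * z1 + x1 * y1:]"
      using eq power_not_zero[OF q_nz] by (rule mult_cancel_common_factor)
    from arg_cong[OF this, of "\<lambda>p. poly p r"]
    have "poly N r * (y1 * z1 + x1 * z1 + x1 * y1) = 0"
      by (auto simp: q_root)
    moreover have "y1 * z1 + x1 * z1 + x1 * y1 > 0"
      using pos by (intro add_pos_pos mult_pos_pos)
    ultimately show ?thesis by simp
  next
    case 2
    have "Y = smult y1 q"
      using \<open>poly Y r = 0\<close> unfolding Y_coeffs q_def by (rule linear_poly_eq_smult_root)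
    from one_other_vanishes[OF this pos(2) \<open>poly Z r \<noteq> 0\<close> eq] show ?thesis .
  next
    case 3
    have "Z = smult z1 q"
      using \<open>poly Z r = 0\<close> unfolding Z_coeffs q_def by (rule linear_poly_eq_smult_root)
    moreover have "M * (X * Z * Y) = N * (Z * Y + X * Y + X * Z)"
      using eq by (simp add: ac_simps)
    ultimately show ?thesis using one_other_vanishes pos(3) \<open>poly Y r \<noteq> 0\<close> by blast
  next
    case 4
    with arg_cong[OF eq, of "\<lambda>p. poly p r"] show ?thesis
      using root by simp
  qed
qed

lemma coeff_ratio_of_reciprocal_sum:
  fixes M X Y Z :: "'a::linordered_field poly" and n0 n1 x0 x1 y0 y1 z0 z1 :: 'a
  assumes "X = [:x0, x1:]" and "Y = [:y0, y1:]" and "Z = [:z0, z1:]"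
    and "M * (X * Y * Z) = [:n0, n1:] * (Y * Z + X * Z + X * Y)"
    and "n0 \<noteq> 0" and "x1 > 0" "y1 > 0" "z1 > 0"
  shows "x1 = x0 * n1 / n0"
proof -
  have "poly [:n0, n1:] (- x0 / x1) = 0"
    by (rule common_root_of_reciprocal_sum[OF assms(1-4) assms(6-8)])
      (use assms(1,6) in simp)
  with assms(5,6) show ?thesis by (simp add: field_simps)
qed

lemma rf_reciprocal_sum_imp_poly_eq:
  fixes M N X Y Z :: "rat poly"
  assumes "N \<noteq> 0" "X \<noteq> 0" "Y \<noteq> 0" "Z \<noteq> 0"
    and "rf M / rf N = 1 / rf X + 1 / rf Y + 1 / rf Z"
  shows "M * (X * Y * Z) = N * (Y * Z + X * Z + X * Y)"
proof -
  have "Fract M N = Fract (Y * Z + X * Z + X * Y) (X * Y * Z)"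
    using assms unfolding rf_def by (simp add: One_fract_def add_fract algebra_simps)
  then show ?thesis
    using assms by (simp add: eq_fract algebra_simps)
qed

theorem lemma4:
  fixes m n0 n1 :: nat and x0 x1 y0 y1 z0 z1 :: rat
  assumes "m > 0" "n0 > 0" "n1 > 0"
    and "x0 > 0" "x1 > 0" "y0 > 0" "y1 > 0" "z0 > 0" "z1 > 0"
    and "rf [:of_nat m:] / rf [:of_nat n0, of_nat n1:]
         = 1 / rf [:x0, x1:] + 1 / rf [:y0, y1:] + 1 / rf [:z0, z1:]"
  shows "x1 = x0 * of_nat n1 / of_nat n0 \<and> y1 = y0 * of_nat n1 / of_nat n0
         \<and> z1 = z0 * of_nat n1 / of_nat n0"
proof -
  define X Y Z where "X = [:x0, x1:]" and "Y = [:y0, y1:]" and "Z = [:z0, z1:]"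
  define M N :: "rat poly" where "M = [:of_nat m:]" and "N = [:of_nat n0, of_nat n1:]"
  have eq: "M * (X * Y * Z) = N * (Y * Z + X * Z + X * Y)"
    unfolding M_def N_def X_def Y_def Z_def using assms
    by (intro rf_reciprocal_sum_imp_poly_eq) auto
  have eq_YXZ: "M * (Y * X * Z) = N * (X * Z + Y * Z + Y * X)"
    and eq_ZYX: "M * (Z * Y * X) = N * (Y * X + Z * X + Z * Y)"
    using eq by (simp_all only: ac_simps)
  have "x1 = x0 * of_nat n1 / of_nat n0"
    by (rule coeff_ratio_of_reciprocal_sum[OF X_def Y_def Z_def eq[unfolded N_def]])
      (use assms in simp_all)
  moreover have "y1 = y0 * of_nat n1 / of_nat n0"
    by (rule coeff_ratio_of_reciprocal_sum[OF Y_def X_def Z_def eq_YXZ[unfolded N_def]])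
      (use assms in simp_all)
  moreover have "z1 = z0 * of_nat n1 / of_nat n0"
    by (rule coeff_ratio_of_reciprocal_sum[OF Z_def Y_def X_def eq_ZYX[unfolded N_def]])
      (use assms in simp_all)
  ultimately show ?thesis by blast
qed

end
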